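(* Let $p$ be a prime, $G$ a finitely generated group and $A\le \mathrm{Aut}(G)$ a subgroup. Then: (1) $\theta_1(A)\le\mathrm{Aut}(L_1^p(G))$ is a finite $p$-group if and only if $\theta_n(A)\le\mathrm{Aut}(L_n^p(G))$ is a finite $p$-group for every $n\ge1$; (2) $\theta_1(A)\le\mathrm{Aut}(L_1^p(G))$ is a finite $p$-group if and only if $\sigma_n(A)\le\mathrm{Aut}(G/\gamma_n^p(G))$ is a finite $p$-group for every $n\ge1$.
   Context: The lower $p$-central filtration of $G$ is $\gamma_1^p(G)=G$, $\gamma_{n+1}^p(G)=(\gamma_n^p(G))^p[G,\gamma_n^p(G)]$, where $H^p=\langle h^p: h\in H\rangle$ and $[H,K]=\langle hkh^{-1}k^{-1}: h\in H,k\in K\rangle$. Set $L_n^p(G)=\gamma_n^p(G)/\gamma_{n+1}^p(G)$. Each $\gamma_n^p(G)$ is characteristic in $G$, so there are natural homomorphisms $\theta_n:\mathrm{Aut}(G)\to\mathrm{Aut}(L_n^p(G))$ and $\sigma_n:\mathrm{Aut}(G)\to\mathrm{Aut}(G/\gamma_n^p(G))$ induced by restriction and passage to quotients. *)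

theory Defs
  imports "HOL-Algebra.Algebra"
begin

definition fin_gen :: "('a, 'b) monoid_scheme \<Rightarrow> bool" where
  "fin_gen G \<longleftrightarrow> (\<exists>S. finite S \<and> S \<subseteq> carrier G \<and> generate G S = carrier G)"

definition pow_subgroup :: "('a, 'b) monoid_scheme \<Rightarrow> nat \<Rightarrow> 'a set \<Rightarrow> 'a set" where
  "pow_subgroup G p H = generate G {h [^]\<^bsub>G\<^esub> p | h. h \<in> H}"

definition comm_subgroup :: "('a, 'b) monoid_scheme \<Rightarrow> 'a set \<Rightarrow> 'a set \<Rightarrow> 'a set" where
  "comm_subgroup G H K =
     generate G {h \<otimes>\<^bsub>G\<^esub> k \<otimes>\<^bsub>G\<^esub> inv\<^bsub>G\<^esub> h \<otimes>\<^bsub>G\<^esub> inv\<^bsub>G\<^esub> k | h k. h \<in> H \<and> k \<in> K}"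

(* lpc_aux G p m = gamma_{m+1}^p(G) *)
primrec lpc_aux :: "('a, 'b) monoid_scheme \<Rightarrow> nat \<Rightarrow> nat \<Rightarrow> 'a set" where
  "lpc_aux G p 0 = carrier G"
| "lpc_aux G p (Suc m) =
     pow_subgroup G p (lpc_aux G p m) <#>\<^bsub>G\<^esub> comm_subgroup G (carrier G) (lpc_aux G p m)"

definition gamma :: "('a, 'b) monoid_scheme \<Rightarrow> nat \<Rightarrow> nat \<Rightarrow> 'a set" where
  "gamma G p n = lpc_aux G p (n - 1)"

definition Lquot :: "('a, 'b) monoid_scheme \<Rightarrow> nat \<Rightarrow> nat \<Rightarrow> 'a set monoid" where
  "Lquot G p n = (G\<lparr>carrier := gamma G p n\<rparr>) Mod (gamma G p (Suc n))"

definition theta :: "('a, 'b) monoid_scheme \<Rightarrow> nat \<Rightarrow> nat \<Rightarrow> ('a \<Rightarrow> 'a) \<Rightarrow> ('a set \<Rightarrow> 'a set)" where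
  "theta G p n \<phi> = restrict (\<lambda>C. \<phi> ` C) (carrier (Lquot G p n))"

definition sigma :: "('a, 'b) monoid_scheme \<Rightarrow> nat \<Rightarrow> nat \<Rightarrow> ('a \<Rightarrow> 'a) \<Rightarrow> ('a set \<Rightarrow> 'a set)" where
  "sigma G p n \<phi> = restrict (\<lambda>C. \<phi> ` C) (carrier (G Mod (gamma G p n)))"

definition finite_p_group :: "nat \<Rightarrow> 'c set \<Rightarrow> bool" where
  "finite_p_group p T \<longleftrightarrow> finite T \<and> (\<exists>k. card T = p ^ k)"

end

theory Submission
  imports Defs
begin

(*
  If \<theta>_1(A) is a finite p-group of order p^e, then a^(p^e) acts trivially on G/\<gamma>_2 for every
  a \<in> A. An automorphism acting trivially on G/\<gamma>_2 acts trivially on every layer \<gamma>_n/\<gamma>_(n+1):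
  the layer is generated by the images of p-th powers and of commutators [g, x] with x \<in> \<gamma>_(n-1),
  and [\<gamma>_2, \<gamma>_n] \<subseteq> \<gamma>_(n+2). Stacking the layers, a p-power of it acts trivially on G/\<gamma>_n.
  As G is finitely generated, every layer is a finitely generated elementary abelian p-group, so
  all layers and all G/\<gamma>_n are finite. Hence the images of A are finite groups of p-power
  exponent, i.e. finite p-groups. The converse implications are the cases n = 1 and n = 2,
  as \<sigma>_2 = \<theta>_1.
*)

declare mult_FactGroup [simp del] one_FactGroup [simp del] lpc_aux.simps(2) [simp del]

section \<open>Commutators\<close>

definition commutator :: "('a, 'b) monoid_scheme \<Rightarrow> 'a \<Rightarrow> 'a \<Rightarrow> 'a" where
  "commutator G x y = x \<otimes>\<^bsub>G\<^esub> y \<otimes>\<^bsub>G\<^esub> inv\<^bsub>G\<^esub> x \<otimes>\<^bsub>G\<^esub> inv\<^bsub>G\<^esub> y"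

definition center :: "('a, 'b) monoid_scheme \<Rightarrow> 'a set" where
  "center G = {z \<in> carrier G. \<forall>x\<in>carrier G. z \<otimes>\<^bsub>G\<^esub> x = x \<otimes>\<^bsub>G\<^esub> z}"

context group
begin

lemma inv_mult_cancel_left [simp]: "x \<in> carrier G \<Longrightarrow> y \<in> carrier G \<Longrightarrow> inv x \<otimes> (x \<otimes> y) = y"
  by (simp add: m_assoc [symmetric])

lemma mult_inv_cancel_left [simp]: "x \<in> carrier G \<Longrightarrow> y \<in> carrier G \<Longrightarrow> x \<otimes> (inv x \<otimes> y) = y"
  by (simp add: m_assoc [symmetric])

lemma commutator_closed [simp]:
  "x \<in> carrier G \<Longrightarrow> y \<in> carrier G \<Longrightarrow> commutator G x y \<in> carrier G"
  by (simp add: commutator_def)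

lemma commutator_eq_one_iff:
  assumes "x \<in> carrier G" "y \<in> carrier G"
  shows "commutator G x y = \<one> \<longleftrightarrow> x \<otimes> y = y \<otimes> x"
proof -
  have "commutator G x y = (x \<otimes> y) \<otimes> inv (y \<otimes> x)"
    using assms by (simp add: commutator_def m_assoc inv_mult_group)
  then show ?thesis
    using assms inv_solve_right'[of \<one> "x \<otimes> y" "y \<otimes> x"] by simp
qed

lemma inv_commutator: "x \<in> carrier G \<Longrightarrow> y \<in> carrier G \<Longrightarrow> inv (commutator G x y) = commutator G y x"
  by (simp add: commutator_def m_assoc inv_mult_group)

lemma center_commute: "z \<in> center G \<Longrightarrow> x \<in> carrier G \<Longrightarrow> z \<otimes> x = x \<otimes> z"
  by (simp add: center_def)

lemma commutator_mult_left:
  assumes "g \<in> carrier G" "h \<in> carrier G" "y \<in> carrier G"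
  shows "commutator G (g \<otimes> h) y = g \<otimes> commutator G h y \<otimes> inv g \<otimes> commutator G g y"
  using assms by (simp add: commutator_def m_assoc inv_mult_group)

lemma commutator_inv_left:
  assumes "g \<in> carrier G" "y \<in> carrier G"
  shows "commutator G (inv g) y = inv g \<otimes> inv (commutator G g y) \<otimes> inv (inv g)"
  using assms by (simp add: commutator_def m_assoc inv_mult_group)

lemma commutator_pow_left:
  assumes g: "g \<in> carrier G" and x: "x \<in> carrier G"
    and gc: "g \<otimes> commutator G g x = commutator G g x \<otimes> g"
  shows "commutator G (g [^] n) x = commutator G g x [^] (n :: nat)"
proof -
  let ?c = "commutator G g x"
  have c: "?c \<in> carrier G" using g x by simp
  have conj: "g [^] n \<otimes> x \<otimes> inv (g [^] n) = ?c [^] n \<otimes> x" for n :: nat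
  proof (induction n)
    case (Suc n)
    have "g [^] Suc n \<otimes> x \<otimes> inv (g [^] Suc n) = g \<otimes> (g [^] n \<otimes> x \<otimes> inv (g [^] n)) \<otimes> inv g"
      using g x by (simp only: nat_pow_Suc2[OF g]) (simp add: m_assoc inv_mult_group)
    also have "\<dots> = ?c [^] n \<otimes> (g \<otimes> x \<otimes> inv g)"
      using g x c group_commutes_pow[OF gc[symmetric] c g, of n] by (simp add: Suc m_assoc [symmetric])
    also have "\<dots> = ?c [^] Suc n \<otimes> x"
      using g x c by (simp add: commutator_def m_assoc)
    finally show ?case .
  qed (simp add: x)
  show ?thesis
    using conj[of n] g x c by (simp add: commutator_def m_assoc)
qed

(* Conjugation by g and by h move y' by central factors, so they commute on y'. *)
lemma commutator_commutes_if_central: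
  assumes g: "g \<in> carrier G" and h: "h \<in> carrier G" and y: "y \<in> carrier G"
    and y'_def: "y' = inv (h \<otimes> g) \<otimes> y \<otimes> (h \<otimes> g)"
    and a: "commutator G g y' \<in> center G" and b: "commutator G h y' \<in> center G"
  shows "commutator G g h \<otimes> y = y \<otimes> commutator G g h"
proof -
  let ?a = "commutator G g y'" and ?b = "commutator G h y'"
  define u where "u = g \<otimes> h"
  define v where "v = h \<otimes> g"
  have y': "y' \<in> carrier G" using g h y by (simp add: y'_def)
  have ac: "?a \<in> carrier G" and bc: "?b \<in> carrier G" using g h y' by simp_all
  have ab: "?a \<otimes> ?b = ?b \<otimes> ?a" using a bc by (rule center_commute)
  have g_y': "g \<otimes> y' = ?a \<otimes> y' \<otimes> g" and h_y': "h \<otimes> y' = ?b \<otimes> y' \<otimes> h"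
    using g h y' by (simp_all add: commutator_def m_assoc)
  have swap: "(k \<otimes> l) \<otimes> y' = d \<otimes> c \<otimes> y' \<otimes> (k \<otimes> l)"
    if "k \<in> carrier G" "l \<in> carrier G" "c \<in> carrier G" "d \<in> carrier G"
      and "k \<otimes> y' = c \<otimes> y' \<otimes> k" "l \<otimes> y' = d \<otimes> y' \<otimes> l" "k \<otimes> d = d \<otimes> k" for k l c d
  proof -
    have "(k \<otimes> l) \<otimes> y' = k \<otimes> (d \<otimes> y' \<otimes> l)" using that y' by (simp add: m_assoc)
    also have "\<dots> = (d \<otimes> k) \<otimes> y' \<otimes> l" using that y' by (simp add: m_assoc [symmetric])
    also have "\<dots> = d \<otimes> (c \<otimes> y' \<otimes> k) \<otimes> l" using that y' by (simp add: m_assoc)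
    also have "\<dots> = d \<otimes> c \<otimes> y' \<otimes> (k \<otimes> l)" using that y' by (simp add: m_assoc)
    finally show ?thesis .
  qed
  have uc: "u \<in> carrier G" and vc: "v \<in> carrier G" using g h by (simp_all add: u_def v_def)
  have uy: "u \<otimes> y' = ?b \<otimes> ?a \<otimes> y' \<otimes> u"
    unfolding u_def by (rule swap[OF g h ac bc g_y' h_y' center_commute[OF b g, symmetric]])
  have vy: "v \<otimes> y' = ?b \<otimes> ?a \<otimes> y' \<otimes> v"
    unfolding v_def using swap[OF h g bc ac h_y' g_y' center_commute[OF a h, symmetric]] ab by simp
  have yv: "y = v \<otimes> y' \<otimes> inv v" using g h y by (simp add: v_def y'_def m_assoc)
  have "commutator G g h \<otimes> y = u \<otimes> inv v \<otimes> (v \<otimes> y' \<otimes> inv v)"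
    using g h yv by (simp add: u_def v_def commutator_def m_assoc inv_mult_group)
  also have "\<dots> = (u \<otimes> y') \<otimes> inv v" using uc vc y' by (simp add: m_assoc)
  also have "\<dots> = ((?b \<otimes> ?a \<otimes> y' \<otimes> v) \<otimes> inv v) \<otimes> (u \<otimes> inv v)"
    using uy uc vc y' ac bc by (simp add: m_assoc)
  also have "\<dots> = y \<otimes> commutator G g h"
    using vy yv g h by (simp add: u_def v_def commutator_def m_assoc inv_mult_group)
  finally show ?thesis .
qed

lemma commutator_mult_center_eq:
  assumes w: "w \<in> carrier G" and g: "g \<in> carrier G" and z: "z \<in> center G" and x: "x \<in> carrier G"
    and wc: "w \<otimes> (g \<otimes> x \<otimes> inv g) = (g \<otimes> x \<otimes> inv g) \<otimes> w"
  shows "commutator G (w \<otimes> g) (z \<otimes> x) = commutator G g x"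
proof -
  have zc: "z \<in> carrier G" using z by (simp add: center_def)
  have "commutator G (w \<otimes> g) (z \<otimes> x) = z \<otimes> (w \<otimes> (g \<otimes> x \<otimes> inv g) \<otimes> inv w \<otimes> inv x) \<otimes> inv z"
    using w g x zc center_commute[OF z, of "w \<otimes> g"]
    by (simp add: commutator_def m_assoc inv_mult_group) (simp add: m_assoc [symmetric])
  also have "\<dots> = w \<otimes> (g \<otimes> x \<otimes> inv g) \<otimes> inv w \<otimes> inv x"
    using w g x zc center_commute[OF z, of "w \<otimes> (g \<otimes> x \<otimes> inv g) \<otimes> inv w \<otimes> inv x"] by (simp add: m_assoc)
  also have "\<dots> = commutator G g x"
    using w g x wc by (simp add: commutator_def m_assoc)
  finally show ?thesis .
qed

end

lemma comm_subgroup_eq: "comm_subgroup G H K = generate G {commutator G h k | h k. h \<in> H \<and> k \<in> K}"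
  by (simp add: comm_subgroup_def commutator_def)

lemma (in group_hom) hom_commutator:
  "x \<in> carrier G \<Longrightarrow> y \<in> carrier G \<Longrightarrow> h (commutator G x y) = commutator H (h x) (h y)"
  by (simp add: commutator_def)

section \<open>Quotient maps\<close>

context normal
begin

lemma quotient_map_hom: "group_hom G (G Mod H) ((#>) H)"
  by (simp add: group_hom_def group_hom_axioms_def r_coset_hom_Mod factorgroup_is_group is_group)

lemma rcos_eq_rcos_iff:
  assumes x: "x \<in> carrier G" and y: "y \<in> carrier G"
  shows "H #> x = H #> y \<longleftrightarrow> x \<otimes> inv y \<in> H"
proof
  assume "H #> x = H #> y"
  then have "H #> (x \<otimes> inv y) = H" by (rule coset_mult_inv2[OF _ x y subset])
  then show "x \<otimes> inv y \<in> H" using x y by (intro coset_join1[OF _ _ subgroup_axioms]) simp_all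
next
  assume "x \<otimes> inv y \<in> H"
  then have "H #> (x \<otimes> inv y) = H" using x y by (intro coset_join2[OF _ subgroup_axioms]) simp_all
  then show "H #> x = H #> y" by (rule coset_mult_inv1[OF _ x y subset])
qed

lemma rcos_eq_one_iff:
  assumes x: "x \<in> carrier G"
  shows "H #> x = \<one>\<^bsub>G Mod H\<^esub> \<longleftrightarrow> x \<in> H"
  unfolding one_FactGroup
  using coset_join1[OF _ x subgroup_axioms] coset_join2[OF x subgroup_axioms] by blast

lemma commutator_mem_iff:
  assumes x: "x \<in> carrier G" and y: "y \<in> carrier G"
  shows "commutator G x y \<in> H \<longleftrightarrow> (H #> x) \<otimes>\<^bsub>G Mod H\<^esub> (H #> y) = (H #> y) \<otimes>\<^bsub>G Mod H\<^esub> (H #> x)"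
proof -
  interpret \<pi>: group_hom G "G Mod H" "(#>) H" by (rule quotient_map_hom)
  have "commutator G x y \<in> H \<longleftrightarrow> commutator (G Mod H) (H #> x) (H #> y) = \<one>\<^bsub>G Mod H\<^esub>"
    using x y by (simp add: rcos_eq_one_iff \<pi>.hom_commutator [symmetric])
  also have "\<dots> \<longleftrightarrow> (H #> x) \<otimes>\<^bsub>G Mod H\<^esub> (H #> y) = (H #> y) \<otimes>\<^bsub>G Mod H\<^esub> (H #> x)"
    using x y by (simp add: \<pi>.H.commutator_eq_one_iff)
  finally show ?thesis .
qed

lemma rcos_mem_center:
  assumes z: "z \<in> carrier G" and comm: "\<And>y. y \<in> carrier G \<Longrightarrow> commutator G z y \<in> H"
  shows "H #> z \<in> center (G Mod H)"
  unfolding center_def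
proof (intro CollectI conjI ballI)
  show "H #> z \<in> carrier (G Mod H)" using z by (auto simp: carrier_FactGroup)
  fix C assume "C \<in> carrier (G Mod H)"
  then obtain y where y: "y \<in> carrier G" "C = H #> y" by (auto simp: carrier_FactGroup)
  show "(H #> z) \<otimes>\<^bsub>G Mod H\<^esub> C = C \<otimes>\<^bsub>G Mod H\<^esub> (H #> z)"
    using comm[OF y(1)] commutator_mem_iff[OF z y(1)] y(2) by simp
qed

end

context group
begin

lemma rcos_eqE:
  assumes "subgroup H G" "x \<in> carrier G" "H #> x = H #> y"
  obtains h where "h \<in> H" "x = h \<otimes> y"
  using rcos_self[OF assms(2,1)] assms(3) by (auto simp: r_coset_def)

lemma subgroup_centralizer_mod:
  assumes N: "N \<lhd> G" and K: "K \<subseteq> carrier G"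
  shows "subgroup {g \<in> carrier G. \<forall>y\<in>K. commutator G g y \<in> N} G"
proof (rule subgroupI)
  interpret N: normal N G by (rule N)
  show "{g \<in> carrier G. \<forall>y\<in>K. commutator G g y \<in> N} \<noteq> {}"
    using K by (auto simp: commutator_def intro!: exI[of _ \<one>])
  fix g assume g: "g \<in> {g \<in> carrier G. \<forall>y\<in>K. commutator G g y \<in> N}"
  then show "inv g \<in> {g \<in> carrier G. \<forall>y\<in>K. commutator G g y \<in> N}"
    using K by (auto simp: commutator_inv_left N.inv_op_closed1 simp del: inv_inv)
  fix h assume "h \<in> {g \<in> carrier G. \<forall>y\<in>K. commutator G g y \<in> N}"
  then show "g \<otimes> h \<in> {g \<in> carrier G. \<forall>y\<in>K. commutator G g y \<in> N}"
    using g K by (auto simp: commutator_mult_left N.inv_op_closed2 N.m_closed)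
qed auto

lemma subgroup_equalizer:
  assumes f: "group_hom G H f" and g: "group_hom G H g"
  shows "subgroup {x \<in> carrier G. f x = g x} G"
proof (rule subgroupI)
  interpret f: group_hom G H f by (rule f)
  interpret g: group_hom G H g by (rule g)
  show "{x \<in> carrier G. f x = g x} \<noteq> {}" by (auto intro!: exI[of _ \<one>])
  fix x y assume "x \<in> {x \<in> carrier G. f x = g x}" "y \<in> {x \<in> carrier G. f x = g x}"
  then show "inv x \<in> {x \<in> carrier G. f x = g x}" "x \<otimes> y \<in> {x \<in> carrier G. f x = g x}"
    by auto
qed auto

end

lemma (in group_hom) subgroup_vimage:
  assumes "subgroup K H"
  shows "subgroup {x \<in> carrier G. h x \<in> K} G"
proof (rule G.subgroupI)
  show "{x \<in> carrier G. h x \<in> K} \<noteq> {}" using subgroup.one_closed[OF assms] by force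
qed (auto intro: subgroup.m_inv_closed[OF assms] subgroup.m_closed[OF assms])

section \<open>Fully invariant subgroups and automorphisms\<close>

definition fully_invariant :: "('a, 'b) monoid_scheme \<Rightarrow> 'a set \<Rightarrow> bool" where
  "fully_invariant G H \<longleftrightarrow> (\<forall>\<phi>\<in>hom G G. \<phi> ` H \<subseteq> H)"

lemma carrier_AutoGroup: "carrier (AutoGroup G) = auto G"
  by (simp add: AutoGroup_def)

lemma AutoGroup_mult_eq_compose:
  "\<phi> \<in> auto G \<Longrightarrow> \<psi> \<in> auto G \<Longrightarrow> \<phi> \<otimes>\<^bsub>AutoGroup G\<^esub> \<psi> = compose (carrier G) \<phi> \<psi>"
  by (simp add: AutoGroup_def BijGroup_def auto_def)

context group
begin

lemma fully_invariantD: "fully_invariant G H \<Longrightarrow> \<phi> \<in> hom G G \<Longrightarrow> x \<in> H \<Longrightarrow> \<phi> x \<in> H"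
  unfolding fully_invariant_def by blast

lemma fully_invariant_generate:
  assumes S: "S \<subseteq> carrier G" and inv: "\<And>\<phi>. \<phi> \<in> hom G G \<Longrightarrow> \<phi> ` S \<subseteq> S"
  shows "fully_invariant G (generate G S)"
  unfolding fully_invariant_def
proof
  fix \<phi> assume \<phi>: "\<phi> \<in> hom G G"
  interpret \<phi>: group_hom G G \<phi> using \<phi> by unfold_locales
  have "\<phi> ` generate G S = generate G (\<phi> ` S)" by (rule \<phi>.generate_img[OF S, symmetric])
  also have "\<dots> \<subseteq> generate G S" by (rule mono_generate[OF inv[OF \<phi>]])
  finally show "\<phi> ` generate G S \<subseteq> generate G S" .
qed

lemma fully_invariant_set_mult:
  assumes H: "fully_invariant G H" "H \<subseteq> carrier G" and K: "fully_invariant G K" "K \<subseteq> carrier G"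
  shows "fully_invariant G (H <#> K)"
  unfolding fully_invariant_def
proof (intro ballI subsetI)
  fix \<phi> y assume \<phi>: "\<phi> \<in> hom G G" and "y \<in> \<phi> ` (H <#> K)"
  then obtain a b where ab: "a \<in> H" "b \<in> K" "y = \<phi> (a \<otimes> b)" by (auto simp: set_mult_def)
  then have "y = \<phi> a \<otimes> \<phi> b" using \<phi> H(2) K(2) by (simp add: hom_mult subsetD)
  moreover have "\<phi> a \<in> H" "\<phi> b \<in> K" using \<phi> ab H(1) K(1) unfolding fully_invariant_def by blast+
  ultimately show "y \<in> H <#> K" by (auto simp: set_mult_def)
qed

lemma fully_invariant_pow_subgroup:
  assumes inv: "fully_invariant G H" and H: "H \<subseteq> carrier G"
  shows "fully_invariant G (pow_subgroup G n H)"
  unfolding pow_subgroup_def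
proof (rule fully_invariant_generate)
  show "{h [^] n | h. h \<in> H} \<subseteq> carrier G" using H by auto
  fix \<phi> assume \<phi>: "\<phi> \<in> hom G G"
  show "\<phi> ` {h [^] n | h. h \<in> H} \<subseteq> {h [^] n | h. h \<in> H}"
  proof
    fix y assume "y \<in> \<phi> ` {h [^] n | h. h \<in> H}"
    then obtain h where h: "h \<in> H" "y = \<phi> (h [^] n)" by blast
    then have "y = \<phi> h [^] n" using H by (simp add: hom_nat_pow[OF \<phi> _ is_group is_group] subsetD)
    then show "y \<in> {h [^] n | h. h \<in> H}" using fully_invariantD[OF inv \<phi> h(1)] by blast
  qed
qed

lemma fully_invariant_comm_subgroup:
  assumes inv: "fully_invariant G H" and H: "H \<subseteq> carrier G"
  shows "fully_invariant G (comm_subgroup G (carrier G) H)"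
  unfolding comm_subgroup_eq
proof (rule fully_invariant_generate)
  show "{commutator G g h | g h. g \<in> carrier G \<and> h \<in> H} \<subseteq> carrier G" using H by auto
  fix \<phi> assume \<phi>: "\<phi> \<in> hom G G"
  interpret \<phi>: group_hom G G \<phi> using \<phi> by unfold_locales
  show "\<phi> ` {commutator G g h | g h. g \<in> carrier G \<and> h \<in> H} \<subseteq> {commutator G g h | g h. g \<in> carrier G \<and> h \<in> H}"
  proof
    fix y assume "y \<in> \<phi> ` {commutator G g h | g h. g \<in> carrier G \<and> h \<in> H}"
    then obtain g h where gh: "g \<in> carrier G" "h \<in> H" "y = \<phi> (commutator G g h)" by blast
    then have "y = commutator G (\<phi> g) (\<phi> h)" using H by (simp add: \<phi>.hom_commutator subsetD)
    then show "y \<in> {commutator G g h | g h. g \<in> carrier G \<and> h \<in> H}"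
      using fully_invariantD[OF inv \<phi> gh(2)] \<phi>.hom_closed[OF gh(1)] by blast
  qed
qed

lemma normal_if_fully_invariant:
  assumes H: "subgroup H G" and inv: "fully_invariant G H"
  shows "H \<lhd> G"
proof (rule normal_invI[OF H])
  fix g h assume g: "g \<in> carrier G" and h: "h \<in> H"
  have "(\<lambda>x. g \<otimes> x \<otimes> inv g) \<in> hom G G"
  proof (rule homI)
    fix x y assume "x \<in> carrier G" "y \<in> carrier G"
    then show "g \<otimes> (x \<otimes> y) \<otimes> inv g = g \<otimes> x \<otimes> inv g \<otimes> (g \<otimes> y \<otimes> inv g)"
      using g by (simp add: m_assoc)
  qed (use g in simp)
  then have "(\<lambda>x. g \<otimes> x \<otimes> inv g) ` H \<subseteq> H" using inv by (simp add: fully_invariant_def)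
  then show "g \<otimes> h \<otimes> inv g \<in> H" using h by blast
qed

lemma auto_inverse:
  assumes \<phi>: "\<phi> \<in> auto G"
  obtains \<psi> where "\<psi> \<in> auto G" "\<And>x. x \<in> carrier G \<Longrightarrow> \<phi> (\<psi> x) = x" "\<And>x. x \<in> carrier G \<Longrightarrow> \<psi> (\<phi> x) = x"
proof -
  have B: "\<phi> \<in> Bij (carrier G)" using \<phi> by (simp add: auto_def)
  then have bij: "bij_betw \<phi> (carrier G) (carrier G)" by (simp add: Bij_def)
  let ?\<psi> = "inv\<^bsub>BijGroup (carrier G)\<^esub> \<phi>"
  have \<psi>: "?\<psi> = (\<lambda>x\<in>carrier G. inv_into (carrier G) \<phi> x)" by (rule inv_BijGroup[OF B])
  show thesis
  proof (rule that)
    show "?\<psi> \<in> auto G" using \<phi> by (rule subgroup.m_inv_closed[OF subgroup_auto])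
    fix x assume x: "x \<in> carrier G"
    show "\<phi> (?\<psi> x) = x" using bij x by (simp add: \<psi> bij_betw_inv_into_right)
    show "?\<psi> (\<phi> x) = x" using bij x by (simp add: \<psi> bij_betw_inv_into_left bij_betwE)
  qed
qed

lemma auto_image_fully_invariant:
  assumes \<phi>: "\<phi> \<in> auto G" and H: "fully_invariant G H" "H \<subseteq> carrier G"
  shows "\<phi> ` H = H"
proof
  show "\<phi> ` H \<subseteq> H" using \<phi> fully_invariantD[OF H(1)] by (auto simp: auto_def)
  obtain \<psi> where \<psi>: "\<psi> \<in> auto G" "\<And>x. x \<in> carrier G \<Longrightarrow> \<phi> (\<psi> x) = x"
    using auto_inverse[OF \<phi>] by metis
  show "H \<subseteq> \<phi> ` H"
  proof
    fix x assume x: "x \<in> H"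
    then have "\<phi> (\<psi> x) = x" using \<psi>(2) H(2) by blast
    moreover have "\<psi> x \<in> H" using x \<psi>(1) fully_invariantD[OF H(1)] by (simp add: auto_def)
    ultimately show "x \<in> \<phi> ` H" by (metis image_eqI)
  qed
qed

lemma funpow_hom: "\<phi> \<in> hom G G \<Longrightarrow> \<phi> ^^ n \<in> hom G G"
proof (induction n)
  case 0
  show ?case by (rule homI) simp_all
next
  case (Suc n)
  then have IH: "\<phi> ^^ n \<in> hom G G" by blast
  show ?case
  proof (rule homI)
    fix x y assume x: "x \<in> carrier G" and y: "y \<in> carrier G"
    show "(\<phi> ^^ Suc n) x \<in> carrier G"
      using hom_in_carrier[OF Suc.prems hom_in_carrier[OF IH x]] by simp
    show "(\<phi> ^^ Suc n) (x \<otimes> y) = (\<phi> ^^ Suc n) x \<otimes> (\<phi> ^^ Suc n) y"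
      using hom_mult[OF IH x y] hom_mult[OF Suc.prems hom_in_carrier[OF IH x] hom_in_carrier[OF IH y]]
      by simp
  qed
qed

lemma AutoGroup_pow_apply:
  assumes \<phi>: "\<phi> \<in> auto G"
  shows "x \<in> carrier G \<Longrightarrow> (\<phi> [^]\<^bsub>AutoGroup G\<^esub> (n :: nat)) x = (\<phi> ^^ n) x"
proof (induction n arbitrary: x)
  case 0
  then show ?case by (simp add: AutoGroup_def BijGroup_def)
next
  case (Suc n)
  interpret A: group "AutoGroup G" by (rule AutoGroup)
  have \<phi>A: "\<phi> \<in> carrier (AutoGroup G)" using \<phi> by (simp add: carrier_AutoGroup)
  have "\<phi> [^]\<^bsub>AutoGroup G\<^esub> Suc n = \<phi> [^]\<^bsub>AutoGroup G\<^esub> n \<otimes>\<^bsub>AutoGroup G\<^esub> \<phi>"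
    by (rule A.nat_pow_Suc)
  also have "\<dots> = compose (carrier G) (\<phi> [^]\<^bsub>AutoGroup G\<^esub> n) \<phi>"
    using A.nat_pow_closed[OF \<phi>A, of n] \<phi> unfolding carrier_AutoGroup by (rule AutoGroup_mult_eq_compose)
  finally have "(\<phi> [^]\<^bsub>AutoGroup G\<^esub> Suc n) x = (\<phi> [^]\<^bsub>AutoGroup G\<^esub> n) (\<phi> x)"
    using Suc.prems by (simp add: compose_def)
  moreover have "\<phi> \<in> hom G G" using \<phi> by (simp add: auto_def)
  then have "\<phi> x \<in> carrier G" using Suc.prems by (rule hom_in_carrier)
  ultimately show ?case using Suc.IH by (simp add: funpow_Suc_right del: funpow.simps)
qed

end

section \<open>Endomorphisms acting trivially on a section\<close>

definition acts_trivially :: "('a, 'b) monoid_scheme \<Rightarrow> ('a \<Rightarrow> 'a) \<Rightarrow> 'a set \<Rightarrow> 'a set \<Rightarrow> bool" where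
  "acts_trivially G \<phi> H N \<longleftrightarrow> (\<forall>x\<in>H. \<phi> x \<otimes>\<^bsub>G\<^esub> inv\<^bsub>G\<^esub> x \<in> N)"

context group
begin

lemma acts_trivially_funpow:
  assumes N: "N \<lhd> G" and b: "b \<in> hom G G" and bN: "b ` N \<subseteq> N" and M: "M \<subseteq> carrier G"
    and GM: "acts_trivially G b (carrier G) M" and MN: "acts_trivially G b M N"
    and pow: "\<And>d. d \<in> M \<Longrightarrow> d [^] n \<in> N"
  shows "acts_trivially G (b ^^ n) (carrier G) N"
  unfolding acts_trivially_def
proof
  interpret N: normal N G by (rule N)
  interpret \<pi>: group_hom G "G Mod N" "(#>) N" by (rule N.quotient_map_hom)
  interpret b: group_hom G G b using b by unfold_locales
  fix g assume g: "g \<in> carrier G"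
  define d where "d = b g \<otimes> inv g"
  have d: "d \<in> M" using GM g by (simp add: acts_trivially_def d_def)
  have dc: "d \<in> carrier G" using d M by blast
  have bg: "b g = d \<otimes> g" using g by (simp add: d_def m_assoc)
  have bd: "N #> b d = N #> d" using MN d dc by (simp add: acts_trivially_def N.rcos_eq_rcos_iff)
  have iter: "N #> (b ^^ j) g = N #> (d [^] j \<otimes> g)" for j
  proof (induction j)
    case (Suc j)
    have y: "(b ^^ j) g \<in> carrier G" using hom_in_carrier[OF funpow_hom[OF b] g] .
    then have "(b ^^ j) g \<in> N #> (d [^] j \<otimes> g)"
      using Suc.IH rcos_self[OF y N.subgroup_axioms] by simp
    then obtain m where m: "m \<in> N" "(b ^^ j) g = m \<otimes> (d [^] j \<otimes> g)"
      by (auto simp: r_coset_def)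
    have mc: "m \<in> carrier G" using m(1) N.subset by blast
    have "N #> (b ^^ Suc j) g = (N #> b m) \<otimes>\<^bsub>G Mod N\<^esub> ((N #> b d) [^]\<^bsub>G Mod N\<^esub> j \<otimes>\<^bsub>G Mod N\<^esub> (N #> b g))"
      using m(2) mc dc g by (simp add: hom_nat_pow[OF b _ is_group is_group] \<pi>.hom_nat_pow)
    also have "N #> b m = \<one>\<^bsub>G Mod N\<^esub>" using m(1) bN mc by (simp add: N.rcos_eq_one_iff image_subset_iff)
    also have "(N #> b d) [^]\<^bsub>G Mod N\<^esub> j \<otimes>\<^bsub>G Mod N\<^esub> (N #> b g) = N #> (d [^] Suc j \<otimes> g)"
      using dc g by (simp add: bd bg \<pi>.hom_nat_pow \<pi>.H.m_assoc)
    finally show ?case using dc g by simp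
  qed (use g in simp)
  have "N #> (b ^^ n) g = N #> g"
    using iter[of n] pow[OF d] dc g by (simp add: N.rcos_eq_one_iff [symmetric])
  then show "(b ^^ n) g \<otimes> inv g \<in> N"
    using g hom_in_carrier[OF funpow_hom[OF b] g] by (simp add: N.rcos_eq_rcos_iff)
qed

end

section \<open>Finiteness criteria\<close>

lemma finite_image_if_factors:
  assumes fin: "finite (g ` A)" and factors: "\<And>x y. x \<in> A \<Longrightarrow> y \<in> A \<Longrightarrow> g x = g y \<Longrightarrow> f x = f y"
  shows "finite (f ` A)"
proof -
  have "f ` A \<subseteq> (\<lambda>c. f (SOME x. x \<in> A \<and> g x = c)) ` (g ` A)"
  proof
    fix y assume "y \<in> f ` A"
    then obtain x where x: "x \<in> A" "y = f x" by blast
    have "(SOME x'. x' \<in> A \<and> g x' = g x) \<in> A \<and> g (SOME x'. x' \<in> A \<and> g x' = g x) = g x"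
      by (rule someI[of _ x]) (use x in simp)
    then have "y = f (SOME x'. x' \<in> A \<and> g x' = g x)" using factors x by metis
    then show "y \<in> (\<lambda>c. f (SOME x. x \<in> A \<and> g x = c)) ` (g ` A)" using x by blast
  qed
  then show ?thesis using fin finite_subset by blast
qed

lemma prime_power_if_prime_divisors_eq:
  fixes n p :: nat
  assumes p: "Factorial_Ring.prime p" and n: "n > 0"
    and q: "\<And>q. Factorial_Ring.prime q \<Longrightarrow> q dvd n \<Longrightarrow> q = p"
  shows "\<exists>j. n = p ^ j"
proof -
  obtain y where y: "n = p ^ multiplicity p n * y" "\<not> p dvd y"
    using multiplicity_decompose'[of n p] n p Factorial_Ring.not_prime_unit by blast
  have "y = 1"
  proof (rule ccontr)
    assume "y \<noteq> 1"
    then obtain r where r: "Factorial_Ring.prime r" "r dvd y" using prime_factor_nat by blast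
    then have "r dvd n" using y(1) by (metis dvd_mult)
    then show False using q[OF r(1)] r(2) y(2) by simp
  qed
  then show ?thesis using y(1) by auto
qed

lemma finite_Bij:
  assumes "finite S"
  shows "finite (Bij S)"
proof (rule finite_subset)
  show "Bij S \<subseteq> S \<rightarrow>\<^sub>E S" by (auto simp: Bij_def bij_betw_def extensional_def)
  show "finite (S \<rightarrow>\<^sub>E S)" using assms by (simp add: finite_PiE)
qed

context group
begin

lemma order_eq_prime_power_if_exponent:
  assumes p: "Factorial_Ring.prime p" and fin: "finite (carrier G)"
    and exp: "\<And>x. x \<in> carrier G \<Longrightarrow> x [^] (p ^ e) = \<one>"
  shows "\<exists>j. order G = p ^ j"
proof (rule prime_power_if_prime_divisors_eq[OF p])
  show "order G > 0" using fin by (simp add: order_gt_0_iff_finite)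
  fix q :: nat assume q: "Factorial_Ring.prime q" "q dvd order G"
  then obtain m where "order G = q ^ 1 * m" by auto
  then obtain Q where Q: "subgroup Q G" "card Q = q" using sylow_thm[OF q(1) is_group _ fin] by (metis power_one_right)
  interpret Q: group "G\<lparr>carrier := Q\<rparr>" by (rule subgroup_imp_group[OF Q(1)])
  have "\<not> Q \<subseteq> {\<one>}" using Q(2) prime_gt_1_nat[OF q(1)] card_mono[of "{\<one>}" Q] by auto
  then obtain x where x: "x \<in> Q" "x \<noteq> \<one>" by blast
  have xc: "x \<in> carrier G" using x(1) Q(1) subgroup.subset by blast
  have "x [^]\<^bsub>G\<lparr>carrier := Q\<rparr>\<^esub> order (G\<lparr>carrier := Q\<rparr>) = \<one>\<^bsub>G\<lparr>carrier := Q\<rparr>\<^esub>"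
    by (rule Q.pow_order_eq_1) (simp add: x)
  then have "x [^] q = \<one>" using Q(2) by (simp add: order_def nat_pow_consistent [symmetric])
  then have "ord x = q" using x(2) xc q(1) pow_eq_id ord_eq_1 by (metis prime_nat_iff)
  moreover have "ord x dvd p ^ e" using pow_eq_id[OF xc] exp[OF xc] by simp
  ultimately have "q dvd p" using q(1) prime_dvd_power by auto
  then show "q = p" using p q(1) by (simp add: primes_dvd_imp_eq)
qed

lemma subgroup_powers_mult:
  assumes t: "t \<in> carrier G" and tn: "t [^] n = \<one>" and n: "(n :: nat) > 0" and K: "subgroup K G"
    and comm: "\<And>y. y \<in> K \<Longrightarrow> y \<otimes> t = t \<otimes> y"
  shows "subgroup {t [^] (i :: nat) \<otimes> y | i y. y \<in> K} G"
proof (rule subgroupI)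
  show "{t [^] (i :: nat) \<otimes> y | i y. y \<in> K} \<subseteq> carrier G" using t subgroup.subset[OF K] by auto
  show "{t [^] (i :: nat) \<otimes> y | i y. y \<in> K} \<noteq> {}" using subgroup.one_closed[OF K] by blast
next
  fix a assume "a \<in> {t [^] (i :: nat) \<otimes> y | i y. y \<in> K}"
  then obtain i :: nat and y where y: "y \<in> K" and a: "a = t [^] i \<otimes> y" by blast
  have yc: "y \<in> carrier G" and iy: "inv y \<in> K"
    using y subgroup.mem_carrier[OF K] subgroup.m_inv_closed[OF K] by auto
  have "(n - 1) * i + i = n * i" using n by (cases n) auto
  then have "t [^] ((n - 1) * i) \<otimes> t [^] i = (t [^] n) [^] i" using t by (simp add: nat_pow_mult nat_pow_pow)
  then have "inv (t [^] i) = t [^] ((n - 1) * i)" using t tn by (simp add: inv_equality)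
  moreover have "t [^] ((n - 1) * i) \<otimes> inv y = inv y \<otimes> t [^] ((n - 1) * i)"
    using group_commutes_pow[OF comm[OF iy, symmetric] t] iy K subgroup.subset by blast
  ultimately have "inv a = t [^] ((n - 1) * i) \<otimes> inv y" using a t yc by (simp add: inv_mult_group)
  then show "inv a \<in> {t [^] (i :: nat) \<otimes> y | i y. y \<in> K}" using iy by blast
next
  fix a b assume "a \<in> {t [^] (i :: nat) \<otimes> y | i y. y \<in> K}" "b \<in> {t [^] (i :: nat) \<otimes> y | i y. y \<in> K}"
  then obtain i j :: nat and y z where y: "y \<in> K" and z: "z \<in> K"
    and a: "a = t [^] i \<otimes> y" and b: "b = t [^] j \<otimes> z" by blast
  have yc: "y \<in> carrier G" and zc: "z \<in> carrier G" using y z subgroup.subset[OF K] by blast+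
  have "a \<otimes> b = t [^] i \<otimes> (y \<otimes> t [^] j) \<otimes> z" using a b t yc zc by (simp add: m_assoc)
  also have "\<dots> = t [^] i \<otimes> (t [^] j \<otimes> y) \<otimes> z"
    using group_commutes_pow[OF comm[OF y, symmetric] t yc] by simp
  also have "\<dots> = t [^] (i + j) \<otimes> (y \<otimes> z)" using t yc zc by (simp add: m_assoc nat_pow_mult [symmetric])
  finally show "a \<otimes> b \<in> {t [^] (i :: nat) \<otimes> y | i y. y \<in> K}"
    using subgroup.m_closed[OF K y z] by blast
qed

lemma finite_powers_mult:
  assumes t: "t \<in> carrier G" and tn: "t [^] n = \<one>" and n: "(n :: nat) > 0" and K: "finite K"
  shows "finite {t [^] (i :: nat) \<otimes> y | i y. y \<in> K}"
proof (rule finite_subset)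
  show "{t [^] (i :: nat) \<otimes> y | i y. y \<in> K} \<subseteq> (\<lambda>(i, y). t [^] i \<otimes> y) ` ({..<n} \<times> K)"
  proof
    fix a assume "a \<in> {t [^] (i :: nat) \<otimes> y | i y. y \<in> K}"
    then obtain i :: nat and y where y: "y \<in> K" and a: "a = t [^] i \<otimes> y" by blast
    have "t [^] i = (t [^] n) [^] (i div n) \<otimes> t [^] (i mod n)"
      using t by (simp add: nat_pow_pow nat_pow_mult mult_div_mod_eq)
    then have "a = t [^] (i mod n) \<otimes> y" using a t tn by simp
    then show "a \<in> (\<lambda>(i, y). t [^] i \<otimes> y) ` ({..<n} \<times> K)" using y n by force
  qed
  show "finite ((\<lambda>(i, y). t [^] i \<otimes> y) ` ({..<n} \<times> K))" using K by simp
qed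

lemma finite_generate_commuting:
  assumes "finite T" and n: "(n :: nat) > 0" and "T \<subseteq> carrier G"
    and "\<And>a b. a \<in> T \<Longrightarrow> b \<in> T \<Longrightarrow> a \<otimes> b = b \<otimes> a" and "\<And>t. t \<in> T \<Longrightarrow> t [^] n = \<one>"
  shows "finite (generate G T)"
  using assms(1,3-5)
proof (induction T rule: finite_induct)
  case empty
  then show ?case by (simp add: generate_empty)
next
  case (insert t T)
  have t: "t \<in> carrier G" and T: "T \<subseteq> carrier G" and tn: "t [^] n = \<one>" using insert.prems by auto
  have "generate G T \<subseteq> {g \<in> carrier G. \<forall>y\<in>{t}. commutator G g y \<in> {\<one>}}"
    using insert.prems t by (intro generate_subgroup_incl subgroup_centralizer_mod one_is_normal)
      (auto simp: commutator_eq_one_iff)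
  then have comm: "y \<otimes> t = t \<otimes> y" if "y \<in> generate G T" for y
    using that t generate_incl[OF T] by (auto simp: commutator_eq_one_iff)
  let ?M = "{t [^] (i :: nat) \<otimes> y | i y. y \<in> generate G T}"
  have "insert t T \<subseteq> ?M"
  proof
    fix x assume x: "x \<in> insert t T"
    show "x \<in> ?M"
    proof (cases "x = t")
      case True
      then have "x = t [^] (1 :: nat) \<otimes> \<one>" using t by simp
      then show ?thesis using generate.one by blast
    next
      case False
      then have "x = t [^] (0 :: nat) \<otimes> x" "x \<in> generate G T"
        using x T by (auto intro: generate.incl)
      then show ?thesis by blast
    qed
  qed
  then have "generate G (insert t T) \<subseteq> ?M"
    by (rule generate_subgroup_incl[OF _ subgroup_powers_mult[OF t tn n generate_is_subgroup[OF T] comm]])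
  moreover have "finite ?M" using finite_powers_mult[OF t tn n] insert.IH insert.prems by auto
  ultimately show ?case by (rule finite_subset)
qed

lemma finite_rcosets_tower:
  assumes N: "subgroup N G" and M: "subgroup M G"
    and fin_M: "finite ((#>) M ` carrier G)" and fin_NM: "finite ((#>) N ` M)"
  shows "finite ((#>) N ` carrier G)"
proof -
  have "(#>) N ` carrier G \<subseteq> (\<lambda>(C, D). C #> (SOME r. r \<in> D)) ` ((#>) N ` M \<times> (#>) M ` carrier G)"
  proof
    fix C assume "C \<in> (#>) N ` carrier G"
    then obtain x where x: "x \<in> carrier G" "C = N #> x" by blast
    let ?r = "SOME r. r \<in> M #> x"
    have "?r \<in> M #> x" using rcos_self[OF x(1) M] by (rule someI)
    then obtain h where h: "h \<in> M" "?r = h \<otimes> x" by (auto simp: r_coset_def)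
    have hc: "h \<in> carrier G" using h(1) M subgroup.subset by blast
    have "C = (N #> inv h) #> ?r"
      using x hc h(2) subgroup.subset[OF N] by (simp add: coset_mult_assoc m_assoc [symmetric])
    then have "C = (\<lambda>(C, D). C #> (SOME r. r \<in> D)) (N #> inv h, M #> x)" by simp
    moreover have "(N #> inv h, M #> x) \<in> (#>) N ` M \<times> (#>) M ` carrier G"
      using subgroup.m_inv_closed[OF M h(1)] x(1) by blast
    ultimately show "C \<in> (\<lambda>(C, D). C #> (SOME r. r \<in> D)) ` ((#>) N ` M \<times> (#>) M ` carrier G)"
      by (rule rev_image_eqI[rotated])
  qed
  then show ?thesis by (rule finite_subset) (intro finite_imageI finite_cartesian_product fin_NM fin_M)
qed

end

section \<open>The lower \<open>p\<close>-central series\<close>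

locale lower_p_central = group G for G (structure) + fixes p :: nat
begin

(* \<Gamma> k is \<gamma>_(k+1) of the paper, so \<Gamma> 0 = G. *)
abbreviation \<Gamma> :: "nat \<Rightarrow> 'a set" where "\<Gamma> k \<equiv> lpc_aux G p k"

lemma \<Gamma>_Suc:
  "\<Gamma> (Suc k) = generate G {x [^] p | x. x \<in> \<Gamma> k}
     <#> generate G {commutator G g x | g x. g \<in> carrier G \<and> x \<in> \<Gamma> k}"
  by (simp add: lpc_aux.simps(2) pow_subgroup_def comm_subgroup_eq)

lemma \<Gamma>_normal_fully_invariant: "\<Gamma> k \<lhd> G \<and> fully_invariant G (\<Gamma> k)"
proof (induction k)
  case 0
  have "fully_invariant G (carrier G)"
    unfolding fully_invariant_def by (auto intro: hom_in_carrier)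
  then show ?case using normal_if_fully_invariant[OF subgroup_self] by simp
next
  case (Suc k)
  then have inv: "fully_invariant G (\<Gamma> k)" and N: "\<Gamma> k \<lhd> G" by simp_all
  from N have sub: "\<Gamma> k \<subseteq> carrier G" by (rule normal_imp_subgroup[THEN subgroup.subset])
  have "subgroup (pow_subgroup G p (\<Gamma> k)) G" "subgroup (comm_subgroup G (carrier G) (\<Gamma> k)) G"
    unfolding pow_subgroup_def comm_subgroup_eq using sub by (auto intro!: generate_is_subgroup)
  moreover have "fully_invariant G (pow_subgroup G p (\<Gamma> k))"
    and "fully_invariant G (comm_subgroup G (carrier G) (\<Gamma> k))"
    using fully_invariant_pow_subgroup[OF inv sub] fully_invariant_comm_subgroup[OF inv sub] .
  ultimately show ?case
    by (simp add: lpc_aux.simps(2) normal_subgroup_set_mult_closed normal_if_fully_invariant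
        fully_invariant_set_mult subgroup.subset)
qed

lemma \<Gamma>_normal: "\<Gamma> k \<lhd> G"
  using \<Gamma>_normal_fully_invariant by blast

lemma \<Gamma>_fully_invariant: "fully_invariant G (\<Gamma> k)"
  using \<Gamma>_normal_fully_invariant by blast

lemma \<Gamma>_subgroup: "subgroup (\<Gamma> k) G"
  using \<Gamma>_normal by (rule normal_imp_subgroup)

lemma \<Gamma>_subset: "\<Gamma> k \<subseteq> carrier G"
  using \<Gamma>_subgroup by (rule subgroup.subset)

lemma \<Gamma>_carrier [simp]: "x \<in> \<Gamma> k \<Longrightarrow> x \<in> carrier G"
  using \<Gamma>_subset by blast

lemma pow_mem_\<Gamma>_Suc: "x \<in> \<Gamma> k \<Longrightarrow> x [^] p \<in> \<Gamma> (Suc k)"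
  unfolding \<Gamma>_Suc set_mult_def
  by (force intro: generate.incl generate.one)

lemma commutator_mem_\<Gamma>_Suc: "g \<in> carrier G \<Longrightarrow> x \<in> \<Gamma> k \<Longrightarrow> commutator G g x \<in> \<Gamma> (Suc k)"
  unfolding \<Gamma>_Suc set_mult_def
  by (force intro: generate.incl generate.one)

lemma \<Gamma>_Suc_subsetI:
  assumes H: "subgroup H G"
    and pow: "\<And>x. x \<in> \<Gamma> k \<Longrightarrow> x [^] p \<in> H"
    and comm: "\<And>g x. g \<in> carrier G \<Longrightarrow> x \<in> \<Gamma> k \<Longrightarrow> commutator G g x \<in> H"
  shows "\<Gamma> (Suc k) \<subseteq> H"
proof -
  have "generate G {x [^] p | x. x \<in> \<Gamma> k} \<subseteq> H"
    by (rule generate_subgroup_incl[OF _ H]) (auto intro: pow)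
  moreover have "generate G {commutator G g x | g x. g \<in> carrier G \<and> x \<in> \<Gamma> k} \<subseteq> H"
    by (rule generate_subgroup_incl[OF _ H]) (auto intro: comm)
  ultimately show ?thesis
    unfolding \<Gamma>_Suc set_mult_def using subgroup.m_closed[OF H] by blast
qed

lemma \<Gamma>_Suc_subset_\<Gamma>: "\<Gamma> (Suc k) \<subseteq> \<Gamma> k"
proof (rule \<Gamma>_Suc_subsetI[OF \<Gamma>_subgroup])
  fix x assume "x \<in> \<Gamma> k"
  then show "x [^] p \<in> \<Gamma> k"
    using subgroup_int_pow_closed[OF \<Gamma>_subgroup, where k = "int p"] by (simp add: int_pow_int)
next
  fix g x assume g: "g \<in> carrier G" and x: "x \<in> \<Gamma> k"
  have "g \<otimes> x \<otimes> inv g \<otimes> inv x \<in> \<Gamma> k"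
    using normal.inv_op_closed2[OF \<Gamma>_normal g x] subgroup.m_inv_closed[OF \<Gamma>_subgroup x]
    by (rule subgroup.m_closed[OF \<Gamma>_subgroup])
  then show "commutator G g x \<in> \<Gamma> k" by (simp add: commutator_def)
qed

lemma \<Gamma>_antimono: "k \<le> m \<Longrightarrow> \<Gamma> m \<subseteq> \<Gamma> k"
  using lift_Suc_antimono_le[of \<Gamma>, OF \<Gamma>_Suc_subset_\<Gamma>] by blast

lemma \<Gamma>_Suc_central:
  assumes z: "z \<in> \<Gamma> (Suc k)"
  shows "\<Gamma> (Suc (Suc k)) #> z \<in> center (G Mod \<Gamma> (Suc (Suc k)))"
proof (rule normal.rcos_mem_center[OF \<Gamma>_normal])
  show "z \<in> carrier G" using z by simp
  fix y assume "y \<in> carrier G"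
  then show "commutator G z y \<in> \<Gamma> (Suc (Suc k))"
    using commutator_mem_\<Gamma>_Suc[OF _ z] inv_commutator[of y z] subgroup.m_inv_closed[OF \<Gamma>_subgroup]
    by (metis \<Gamma>_carrier z)
qed

lemma commutator_pow_mem_\<Gamma>:
  assumes g: "g \<in> carrier G" and y: "y \<in> \<Gamma> k"
  shows "commutator G (g [^] p) y \<in> \<Gamma> (Suc (Suc k))"
proof -
  let ?N = "\<Gamma> (Suc (Suc k))" and ?Q = "G Mod \<Gamma> (Suc (Suc k))"
  interpret N: normal ?N G by (rule \<Gamma>_normal)
  interpret \<pi>: group_hom G ?Q "(#>) ?N" by (rule N.quotient_map_hom)
  have c: "commutator G g y \<in> \<Gamma> (Suc k)" by (rule commutator_mem_\<Gamma>_Suc[OF g y])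
  have "?N #> commutator G (g [^] p) y = commutator ?Q (?N #> g) (?N #> y) [^]\<^bsub>?Q\<^esub> p"
    using g y \<pi>.H.commutator_pow_left \<pi>.H.center_commute[OF \<Gamma>_Suc_central[OF c]]
    by (simp add: \<pi>.hom_commutator \<pi>.hom_nat_pow)
  also have "\<dots> = \<one>\<^bsub>?Q\<^esub>"
    using g y pow_mem_\<Gamma>_Suc[OF c] by (simp flip: \<pi>.hom_commutator \<pi>.hom_nat_pow add: N.rcos_eq_one_iff)
  finally show ?thesis using g y by (simp add: N.rcos_eq_one_iff)
qed

lemma commutator_commutator_mem_\<Gamma>:
  assumes g: "g \<in> carrier G" and h: "h \<in> carrier G" and y: "y \<in> \<Gamma> k"
  shows "commutator G (commutator G g h) y \<in> \<Gamma> (Suc (Suc k))"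
proof -
  let ?N = "\<Gamma> (Suc (Suc k))" and ?Q = "G Mod \<Gamma> (Suc (Suc k))"
  interpret N: normal ?N G by (rule \<Gamma>_normal)
  interpret \<pi>: group_hom G ?Q "(#>) ?N" by (rule N.quotient_map_hom)
  define y' where "y' = inv (h \<otimes> g) \<otimes> y \<otimes> (h \<otimes> g)"
  have y': "y' \<in> \<Gamma> k" unfolding y'_def using g h y by (simp add: normal.inv_op_closed1[OF \<Gamma>_normal])
  have central: "commutator ?Q (?N #> x) (?N #> y') \<in> center ?Q" if "x \<in> carrier G" for x
    using \<Gamma>_Suc_central[OF commutator_mem_\<Gamma>_Suc[OF that y']] that y' by (simp add: \<pi>.hom_commutator)
  have "(?N #> commutator G g h) \<otimes>\<^bsub>?Q\<^esub> (?N #> y) = (?N #> y) \<otimes>\<^bsub>?Q\<^esub> (?N #> commutator G g h)"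
    using \<pi>.H.commutator_commutes_if_central[OF _ _ _ _ central[OF g] central[OF h]] g h y
    by (simp add: \<pi>.hom_commutator y'_def)
  then show ?thesis using g h y by (simp add: N.commutator_mem_iff)
qed

lemma commutator_\<Gamma>1_\<Gamma>:
  assumes w: "w \<in> \<Gamma> 1" and x: "x \<in> \<Gamma> k"
  shows "commutator G w x \<in> \<Gamma> (Suc (Suc k))"
proof -
  have "\<Gamma> (Suc 0) \<subseteq> {g \<in> carrier G. \<forall>y\<in>\<Gamma> k. commutator G g y \<in> \<Gamma> (Suc (Suc k))}"
    by (rule \<Gamma>_Suc_subsetI[OF subgroup_centralizer_mod[OF \<Gamma>_normal \<Gamma>_subset]])
      (simp_all add: commutator_pow_mem_\<Gamma> commutator_commutator_mem_\<Gamma>)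
  then show ?thesis using w x by auto
qed

lemma pow_mult_mod_\<Gamma>:
  assumes z: "z \<in> \<Gamma> (Suc k)" and x: "x \<in> carrier G"
  shows "\<Gamma> (Suc (Suc k)) #> (z \<otimes> x) [^] p = \<Gamma> (Suc (Suc k)) #> x [^] p"
proof -
  let ?N = "\<Gamma> (Suc (Suc k))" and ?Q = "G Mod \<Gamma> (Suc (Suc k))"
  interpret N: normal ?N G by (rule \<Gamma>_normal)
  interpret \<pi>: group_hom G ?Q "(#>) ?N" by (rule N.quotient_map_hom)
  have "?N #> (z \<otimes> x) [^] p = (?N #> z) [^]\<^bsub>?Q\<^esub> p \<otimes>\<^bsub>?Q\<^esub> (?N #> x) [^]\<^bsub>?Q\<^esub> p"
    using z x \<pi>.H.pow_mult_distrib[OF \<pi>.H.center_commute[OF \<Gamma>_Suc_central[OF z]]]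
    by (simp add: \<pi>.hom_nat_pow)
  also have "(?N #> z) [^]\<^bsub>?Q\<^esub> p = \<one>\<^bsub>?Q\<^esub>"
    using z pow_mem_\<Gamma>_Suc[OF z] by (simp flip: \<pi>.hom_nat_pow add: N.rcos_eq_one_iff)
  finally show ?thesis using x by (simp add: \<pi>.hom_nat_pow)
qed

lemma commutator_mult_mod_\<Gamma>:
  assumes w: "w \<in> \<Gamma> 1" and g: "g \<in> carrier G" and z: "z \<in> \<Gamma> (Suc k)" and x: "x \<in> \<Gamma> k"
  shows "\<Gamma> (Suc (Suc k)) #> commutator G (w \<otimes> g) (z \<otimes> x) = \<Gamma> (Suc (Suc k)) #> commutator G g x"
proof -
  let ?N = "\<Gamma> (Suc (Suc k))" and ?Q = "G Mod \<Gamma> (Suc (Suc k))"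
  interpret N: normal ?N G by (rule \<Gamma>_normal)
  interpret \<pi>: group_hom G ?Q "(#>) ?N" by (rule N.quotient_map_hom)
  have "commutator G w (g \<otimes> x \<otimes> inv g) \<in> ?N"
    using commutator_\<Gamma>1_\<Gamma>[OF w normal.inv_op_closed2[OF \<Gamma>_normal g x]] .
  then have "(?N #> w) \<otimes>\<^bsub>?Q\<^esub> (?N #> (g \<otimes> x \<otimes> inv g)) = (?N #> (g \<otimes> x \<otimes> inv g)) \<otimes>\<^bsub>?Q\<^esub> (?N #> w)"
    using w g x by (simp add: N.commutator_mem_iff)
  then show ?thesis
    using \<pi>.H.commutator_mult_center_eq[OF _ _ \<Gamma>_Suc_central[OF z]] w g z x
    by (simp add: \<pi>.hom_commutator)
qed

lemma acts_trivially_layer: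
  assumes \<phi>: "\<phi> \<in> hom G G" and triv: "acts_trivially G \<phi> (carrier G) (\<Gamma> 1)"
  shows "acts_trivially G \<phi> (\<Gamma> k) (\<Gamma> (Suc k))"
proof (induction k)
  case 0
  then show ?case using triv by simp
next
  case (Suc k)
  let ?N = "\<Gamma> (Suc (Suc k))" and ?Q = "G Mod \<Gamma> (Suc (Suc k))"
  interpret N: normal ?N G by (rule \<Gamma>_normal)
  interpret \<pi>: group_hom G ?Q "(#>) ?N" by (rule N.quotient_map_hom)
  interpret \<phi>: group_hom G G \<phi> using \<phi> by unfold_locales
  have "(\<lambda>y. ?N #> \<phi> y) \<in> hom G ?Q" by (rule homI) simp_all
  then have S: "subgroup {y \<in> carrier G. ?N #> \<phi> y = ?N #> y} G"
    by (intro subgroup_equalizer) (unfold_locales, simp_all)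
  have \<phi>_eq: "\<phi> x = (\<phi> x \<otimes> inv x) \<otimes> x" if "x \<in> carrier G" for x
    using that by (simp add: m_assoc)
  have "\<Gamma> (Suc k) \<subseteq> {y \<in> carrier G. ?N #> \<phi> y = ?N #> y}"
  proof (rule \<Gamma>_Suc_subsetI[OF S])
    fix x assume x: "x \<in> \<Gamma> k"
    have z: "\<phi> x \<otimes> inv x \<in> \<Gamma> (Suc k)" using Suc.IH x by (simp add: acts_trivially_def)
    have "?N #> \<phi> (x [^] p) = ?N #> ((\<phi> x \<otimes> inv x) \<otimes> x) [^] p"
      using x \<phi>_eq[of x] by (simp add: \<phi>.hom_nat_pow)
    also have "\<dots> = ?N #> x [^] p" using x by (simp add: pow_mult_mod_\<Gamma>[OF z])
    finally show "x [^] p \<in> {y \<in> carrier G. ?N #> \<phi> y = ?N #> y}" using x by simp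
  next
    fix g x assume g: "g \<in> carrier G" and x: "x \<in> \<Gamma> k"
    have w: "\<phi> g \<otimes> inv g \<in> \<Gamma> 1" using triv g by (simp add: acts_trivially_def)
    have z: "\<phi> x \<otimes> inv x \<in> \<Gamma> (Suc k)" using Suc.IH x by (simp add: acts_trivially_def)
    have "?N #> \<phi> (commutator G g x) = ?N #> commutator G ((\<phi> g \<otimes> inv g) \<otimes> g) ((\<phi> x \<otimes> inv x) \<otimes> x)"
      using g x \<phi>_eq[of g] \<phi>_eq[of x] by (simp add: \<phi>.hom_commutator)
    also have "\<dots> = ?N #> commutator G g x" by (rule commutator_mult_mod_\<Gamma>[OF w g z x])
    finally show "commutator G g x \<in> {y \<in> carrier G. ?N #> \<phi> y = ?N #> y}" using g x by simp
  qed
  then show ?case by (auto simp: acts_trivially_def N.rcos_eq_rcos_iff [symmetric])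
qed

lemma acts_trivially_funpow_p_power:
  assumes \<phi>: "\<phi> \<in> hom G G" and triv: "acts_trivially G \<phi> (carrier G) (\<Gamma> 1)"
  shows "acts_trivially G (\<phi> ^^ p ^ m) (carrier G) (\<Gamma> (Suc m))"
proof (induction m)
  case 0
  then show ?case using triv by simp
next
  case (Suc m)
  let ?b = "\<phi> ^^ p ^ m"
  have b: "?b \<in> hom G G" by (rule funpow_hom[OF \<phi>])
  have "acts_trivially G ?b (carrier G) (\<Gamma> 1)"
    using Suc.IH \<Gamma>_antimono[of 1 "Suc m"] by (auto simp: acts_trivially_def)
  then have "acts_trivially G ?b (\<Gamma> (Suc m)) (\<Gamma> (Suc (Suc m)))" by (rule acts_trivially_layer[OF b])
  then have "acts_trivially G (?b ^^ p) (carrier G) (\<Gamma> (Suc (Suc m)))"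
    using acts_trivially_funpow[OF \<Gamma>_normal b _ \<Gamma>_subset Suc.IH _ pow_mem_\<Gamma>_Suc]
      fully_invariantD[OF \<Gamma>_fully_invariant b] by blast
  then show ?case by (simp add: funpow_mult mult.commute)
qed

section \<open>Finiteness of the quotients for finitely generated groups\<close>

lemma finite_quotient_\<Gamma>1:
  assumes fg: "fin_gen G" and p: "p > 0"
  shows "finite ((#>) (\<Gamma> 1) ` carrier G)"
proof -
  obtain S where S: "finite S" "S \<subseteq> carrier G" "generate G S = carrier G"
    using fg by (auto simp: fin_gen_def)
  let ?N = "\<Gamma> (Suc 0)" and ?Q = "G Mod \<Gamma> (Suc 0)"
  interpret N: normal ?N G by (rule \<Gamma>_normal)
  interpret \<pi>: group_hom G ?Q "(#>) ?N" by (rule N.quotient_map_hom)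
  have "(#>) ?N ` carrier G = generate ?Q ((#>) ?N ` S)"
    using \<pi>.generate_img[OF S(2)] S(3) by simp
  also have "finite \<dots>"
  proof (rule \<pi>.H.finite_generate_commuting[OF finite_imageI[OF S(1)] p])
    show "(#>) ?N ` S \<subseteq> carrier ?Q" using S(2) by (auto intro!: \<pi>.hom_closed)
  next
    fix a b assume "a \<in> (#>) ?N ` S" "b \<in> (#>) ?N ` S"
    then obtain s t where st: "s \<in> carrier G" "t \<in> carrier G" "a = ?N #> s" "b = ?N #> t"
      using S(2) by auto
    have "commutator G s t \<in> ?N" using commutator_mem_\<Gamma>_Suc[of s t 0] st by simp
    then show "a \<otimes>\<^bsub>?Q\<^esub> b = b \<otimes>\<^bsub>?Q\<^esub> a" using st by (simp add: N.commutator_mem_iff)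
  next
    fix a assume "a \<in> (#>) ?N ` S"
    then obtain s where s: "s \<in> carrier G" "a = ?N #> s" using S(2) by auto
    have "s [^] p \<in> ?N" using pow_mem_\<Gamma>_Suc[of s 0] s by simp
    then show "a [^]\<^bsub>?Q\<^esub> p = \<one>\<^bsub>?Q\<^esub>" using s by (simp flip: \<pi>.hom_nat_pow add: N.rcos_eq_one_iff)
  qed
  finally show ?thesis by simp
qed

lemma finite_generate_layer:
  assumes p: "p > 0" and fin: "finite T" and T: "T \<subseteq> (#>) (\<Gamma> (Suc (Suc k))) ` \<Gamma> (Suc k)"
  shows "finite (generate (G Mod \<Gamma> (Suc (Suc k))) T)"
proof -
  let ?N = "\<Gamma> (Suc (Suc k))" and ?Q = "G Mod \<Gamma> (Suc (Suc k))"
  interpret N: normal ?N G by (rule \<Gamma>_normal)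
  interpret \<pi>: group_hom G ?Q "(#>) ?N" by (rule N.quotient_map_hom)
  have TQ: "T \<subseteq> carrier ?Q" using T \<Gamma>_subset by auto
  show ?thesis
  proof (rule \<pi>.H.finite_generate_commuting[OF fin p TQ])
    fix a b assume "a \<in> T" "b \<in> T"
    then obtain z where z: "z \<in> \<Gamma> (Suc k)" "a = ?N #> z" using T by auto
    show "a \<otimes>\<^bsub>?Q\<^esub> b = b \<otimes>\<^bsub>?Q\<^esub> a"
      using \<pi>.H.center_commute[OF \<Gamma>_Suc_central[OF z(1)]] \<open>b \<in> T\<close> TQ z(2) by auto
  next
    fix a assume "a \<in> T"
    then obtain z where z: "z \<in> \<Gamma> (Suc k)" "a = ?N #> z" using T by auto
    then show "a [^]\<^bsub>?Q\<^esub> p = \<one>\<^bsub>?Q\<^esub>"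
      using pow_mem_\<Gamma>_Suc[OF z(1)] by (simp flip: \<pi>.hom_nat_pow add: N.rcos_eq_one_iff)
  qed
qed

lemma layer_subset_generate:
  "(#>) (\<Gamma> (Suc (Suc k))) ` \<Gamma> (Suc k) \<subseteq> generate (G Mod \<Gamma> (Suc (Suc k)))
     ((\<lambda>x. \<Gamma> (Suc (Suc k)) #> x [^] p) ` \<Gamma> k
       \<union> (\<lambda>(g, x). \<Gamma> (Suc (Suc k)) #> commutator G g x) ` (carrier G \<times> \<Gamma> k))"
  (is "_ \<subseteq> generate ?Q ?T")
proof -
  let ?N = "\<Gamma> (Suc (Suc k))"
  interpret N: normal ?N G by (rule \<Gamma>_normal)
  interpret \<pi>: group_hom G ?Q "(#>) ?N" by (rule N.quotient_map_hom)
  have "?T \<subseteq> carrier ?Q" by auto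
  then have "\<Gamma> (Suc k) \<subseteq> {y \<in> carrier G. ?N #> y \<in> generate ?Q ?T}"
    by (intro \<Gamma>_Suc_subsetI \<pi>.subgroup_vimage \<pi>.H.generate_is_subgroup) (auto intro: generate.incl)
  then show ?thesis by auto
qed

lemma finite_pow_image_layer:
  assumes "finite ((#>) (\<Gamma> (Suc k)) ` \<Gamma> k)"
  shows "finite ((\<lambda>x. \<Gamma> (Suc (Suc k)) #> x [^] p) ` \<Gamma> k)"
proof (rule finite_image_if_factors[OF assms])
  fix x y assume x: "x \<in> \<Gamma> k" and y: "y \<in> \<Gamma> k" and eq: "\<Gamma> (Suc k) #> x = \<Gamma> (Suc k) #> y"
  obtain z where "z \<in> \<Gamma> (Suc k)" "x = z \<otimes> y" by (rule rcos_eqE[OF \<Gamma>_subgroup \<Gamma>_carrier[OF x] eq])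
  then show "\<Gamma> (Suc (Suc k)) #> x [^] p = \<Gamma> (Suc (Suc k)) #> y [^] p" using pow_mult_mod_\<Gamma> y by simp
qed

lemma finite_commutator_image_layer:
  assumes fin1: "finite ((#>) (\<Gamma> 1) ` carrier G)" and fin: "finite ((#>) (\<Gamma> (Suc k)) ` \<Gamma> k)"
  shows "finite ((\<lambda>(g, x). \<Gamma> (Suc (Suc k)) #> commutator G g x) ` (carrier G \<times> \<Gamma> k))"
proof (rule finite_image_if_factors[where g = "\<lambda>(g, x). (\<Gamma> 1 #> g, \<Gamma> (Suc k) #> x)"])
  have "(\<lambda>(g, x). (\<Gamma> 1 #> g, \<Gamma> (Suc k) #> x)) ` (carrier G \<times> \<Gamma> k)
      \<subseteq> (#>) (\<Gamma> 1) ` carrier G \<times> (#>) (\<Gamma> (Suc k)) ` \<Gamma> k" by auto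
  moreover have "finite ((#>) (\<Gamma> 1) ` carrier G \<times> (#>) (\<Gamma> (Suc k)) ` \<Gamma> k)"
    using fin1 fin by (rule finite_cartesian_product)
  ultimately show "finite ((\<lambda>(g, x). (\<Gamma> 1 #> g, \<Gamma> (Suc k) #> x)) ` (carrier G \<times> \<Gamma> k))"
    by (rule finite_subset)
next
  fix a b assume "a \<in> carrier G \<times> \<Gamma> k" "b \<in> carrier G \<times> \<Gamma> k"
    and "(case a of (g, x) \<Rightarrow> (\<Gamma> 1 #> g, \<Gamma> (Suc k) #> x)) = (case b of (g, x) \<Rightarrow> (\<Gamma> 1 #> g, \<Gamma> (Suc k) #> x))"
  then obtain g x h y where gx: "a = (g, x)" "b = (h, y)" "g \<in> carrier G" "x \<in> \<Gamma> k" "h \<in> carrier G" "y \<in> \<Gamma> k"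
    and eq: "\<Gamma> 1 #> g = \<Gamma> 1 #> h" "\<Gamma> (Suc k) #> x = \<Gamma> (Suc k) #> y" by auto
  obtain w where "w \<in> \<Gamma> 1" "g = w \<otimes> h" by (rule rcos_eqE[OF \<Gamma>_subgroup gx(3) eq(1)])
  moreover obtain z where "z \<in> \<Gamma> (Suc k)" "x = z \<otimes> y"
    by (rule rcos_eqE[OF \<Gamma>_subgroup \<Gamma>_carrier[OF gx(4)] eq(2)])
  ultimately show "(case a of (g, x) \<Rightarrow> \<Gamma> (Suc (Suc k)) #> commutator G g x)
      = (case b of (g, x) \<Rightarrow> \<Gamma> (Suc (Suc k)) #> commutator G g x)"
    using gx commutator_mult_mod_\<Gamma> by simp
qed

lemma finite_layer_\<Gamma>:
  assumes fg: "fin_gen G" and p: "p > 0"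
  shows "finite ((#>) (\<Gamma> (Suc k)) ` \<Gamma> k)"
proof (induction k)
  case 0
  then show ?case using finite_quotient_\<Gamma>1[OF fg p] by simp
next
  case (Suc k)
  let ?T = "(\<lambda>x. \<Gamma> (Suc (Suc k)) #> x [^] p) ` \<Gamma> k
    \<union> (\<lambda>(g, x). \<Gamma> (Suc (Suc k)) #> commutator G g x) ` (carrier G \<times> \<Gamma> k)"
  have "finite ?T"
    using finite_pow_image_layer[OF Suc.IH] finite_commutator_image_layer[OF finite_quotient_\<Gamma>1[OF fg p] Suc.IH]
    by simp
  moreover have "?T \<subseteq> (#>) (\<Gamma> (Suc (Suc k))) ` \<Gamma> (Suc k)"
    using pow_mem_\<Gamma>_Suc commutator_mem_\<Gamma>_Suc by auto
  ultimately have "finite (generate (G Mod \<Gamma> (Suc (Suc k))) ?T)" by (rule finite_generate_layer[OF p])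
  then show ?case using layer_subset_generate by (rule finite_subset[rotated])
qed

lemma finite_quotient_\<Gamma>:
  assumes fg: "fin_gen G" and p: "p > 0"
  shows "finite ((#>) (\<Gamma> k) ` carrier G)"
proof (induction k)
  case 0
  have "(#>) (\<Gamma> 0) ` carrier G \<subseteq> {carrier G}" using coset_join2[OF _ subgroup_self] by auto
  then show ?case by (rule finite_subset) simp
next
  case (Suc k)
  show ?case
    by (rule finite_rcosets_tower[OF \<Gamma>_subgroup \<Gamma>_subgroup Suc.IH finite_layer_\<Gamma>[OF fg p]])
qed

end

section \<open>Automorphisms acting on a fully invariant section\<close>

definition induced_map :: "('a, 'b) monoid_scheme \<Rightarrow> 'a set \<Rightarrow> 'a set \<Rightarrow> ('a \<Rightarrow> 'a) \<Rightarrow> 'a set \<Rightarrow> 'a set" where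
  "induced_map G H N \<phi> = restrict (\<lambda>C. \<phi> ` C) (carrier (G\<lparr>carrier := H\<rparr> Mod N))"

locale invariant_section = group G for G (structure) +
  fixes H N :: "'a set"
  assumes H: "subgroup H G" and N: "N \<lhd> G"
    and H_invariant: "fully_invariant G H" and N_invariant: "fully_invariant G N"
begin

abbreviation Q :: "'a set set" where "Q \<equiv> carrier (G\<lparr>carrier := H\<rparr> Mod N)"

lemma Q_eq: "Q = (#>) N ` H"
  by (auto simp: FactGroup_def RCOSETS_def r_coset_def)

lemma H_carrier: "H \<subseteq> carrier G"
  using H by (rule subgroup.subset)

lemma N_carrier: "N \<subseteq> carrier G"
  using N by (rule normal_imp_subgroup[THEN subgroup.subset])

lemma Q_carrier: "C \<in> Q \<Longrightarrow> C \<subseteq> carrier G"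
  using H_carrier N_carrier by (auto simp: Q_eq r_coset_def)

lemma induced_map_coset:
  assumes \<phi>: "\<phi> \<in> auto G" and h: "h \<in> H"
  shows "induced_map G H N \<phi> (N #> h) = N #> \<phi> h"
proof -
  have hom: "\<phi> \<in> hom G G" using \<phi> by (simp add: auto_def)
  have "\<phi> ` (N #> h) = (\<phi> ` N) #> \<phi> h"
    using h H_carrier N_carrier by (force simp: r_coset_def hom_mult[OF hom])
  also have "\<phi> ` N = N" by (rule auto_image_fully_invariant[OF \<phi> N_invariant N_carrier])
  finally show ?thesis using h by (auto simp: induced_map_def Q_eq)
qed

lemma induced_map_mem:
  assumes \<phi>: "\<phi> \<in> auto G" and C: "C \<in> Q"
  shows "induced_map G H N \<phi> C \<in> Q"
proof -
  obtain h where h: "h \<in> H" "C = N #> h" using C by (auto simp: Q_eq)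
  have "\<phi> h \<in> H" using \<phi> h(1) fully_invariantD[OF H_invariant] by (simp add: auto_def)
  then show ?thesis using induced_map_coset[OF \<phi> h(1)] h(2) by (simp add: Q_eq)
qed

lemma induced_map_compose:
  assumes \<phi>: "\<phi> \<in> auto G" and \<psi>: "\<psi> \<in> auto G" and C: "C \<in> Q"
  shows "induced_map G H N \<phi> (induced_map G H N \<psi> C) = induced_map G H N (compose (carrier G) \<phi> \<psi>) C"
  using induced_map_mem[OF \<psi> C] C Q_carrier[OF C]
  by (auto simp: induced_map_def compose_def subsetD)

lemma induced_map_Bij:
  assumes \<phi>: "\<phi> \<in> auto G"
  shows "induced_map G H N \<phi> \<in> Bij Q"
proof -
  obtain \<psi> where \<psi>: "\<psi> \<in> auto G" "\<And>x. x \<in> carrier G \<Longrightarrow> \<phi> (\<psi> x) = x" "\<And>x. x \<in> carrier G \<Longrightarrow> \<psi> (\<phi> x) = x"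
    using auto_inverse[OF \<phi>] by metis
  have inverse: "induced_map G H N \<chi> (induced_map G H N \<chi>' C) = C"
    if "\<chi> \<in> auto G" "\<chi>' \<in> auto G" "\<And>x. x \<in> carrier G \<Longrightarrow> \<chi> (\<chi>' x) = x" "C \<in> Q" for \<chi> \<chi>' C
  proof -
    have "induced_map G H N \<chi> (induced_map G H N \<chi>' C) = compose (carrier G) \<chi> \<chi>' ` C"
      using induced_map_compose[OF that(1,2,4)] that(4) by (simp add: induced_map_def)
    also have "\<dots> = (\<lambda>x. x) ` C"
      using that(3) Q_carrier[OF that(4)] by (intro image_cong) (auto simp: compose_def)
    finally show ?thesis by simp
  qed
  have "bij_betw (induced_map G H N \<phi>) Q Q"
    by (rule bij_betw_byWitness[where f' = "induced_map G H N \<psi>"])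
      (use inverse[OF \<psi>(1) \<phi> \<psi>(3)] inverse[OF \<phi> \<psi>(1) \<psi>(2)] induced_map_mem \<phi> \<psi>(1) in auto)
  then show ?thesis by (simp add: Bij_def induced_map_def)
qed

lemma induced_map_hom: "induced_map G H N \<in> hom (AutoGroup G) (BijGroup Q)"
proof (rule homI)
  fix \<phi> assume "\<phi> \<in> carrier (AutoGroup G)"
  then show "induced_map G H N \<phi> \<in> carrier (BijGroup Q)"
    using induced_map_Bij by (simp add: carrier_AutoGroup BijGroup_def)
next
  fix \<phi> \<psi> assume "\<phi> \<in> carrier (AutoGroup G)" "\<psi> \<in> carrier (AutoGroup G)"
  then have \<phi>: "\<phi> \<in> auto G" and \<psi>: "\<psi> \<in> auto G" by (simp_all add: carrier_AutoGroup)
  have "\<phi> \<otimes>\<^bsub>AutoGroup G\<^esub> \<psi> = compose (carrier G) \<phi> \<psi>"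
    using \<phi> \<psi> by (rule AutoGroup_mult_eq_compose)
  moreover have "induced_map G H N \<phi> \<otimes>\<^bsub>BijGroup Q\<^esub> induced_map G H N \<psi>
      = compose Q (induced_map G H N \<phi>) (induced_map G H N \<psi>)"
    using induced_map_Bij[OF \<phi>] induced_map_Bij[OF \<psi>] by (simp add: BijGroup_def)
  moreover have "induced_map G H N (compose (carrier G) \<phi> \<psi>) C
      = compose Q (induced_map G H N \<phi>) (induced_map G H N \<psi>) C" for C
  proof (cases "C \<in> Q")
    case True
    then show ?thesis by (simp add: compose_def induced_map_compose[OF \<phi> \<psi>])
  next
    case False
    then show ?thesis by (simp add: compose_def induced_map_def)
  qed
  ultimately show "induced_map G H N (\<phi> \<otimes>\<^bsub>AutoGroup G\<^esub> \<psi>)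
      = induced_map G H N \<phi> \<otimes>\<^bsub>BijGroup Q\<^esub> induced_map G H N \<psi>"
    by auto
qed

lemma induced_map_eq_one_iff:
  assumes \<phi>: "\<phi> \<in> auto G"
  shows "induced_map G H N \<phi> = \<one>\<^bsub>BijGroup Q\<^esub> \<longleftrightarrow> acts_trivially G \<phi> H N"
proof -
  interpret N: normal N G by (rule N)
  have "induced_map G H N \<phi> = \<one>\<^bsub>BijGroup Q\<^esub> \<longleftrightarrow> (\<forall>h\<in>H. induced_map G H N \<phi> (N #> h) = N #> h)"
    by (auto simp: BijGroup_def induced_map_def fun_eq_iff Q_eq)
  also have "\<dots> \<longleftrightarrow> (\<forall>h\<in>H. N #> \<phi> h = N #> h)" by (simp add: induced_map_coset[OF \<phi>])
  also have "\<dots> \<longleftrightarrow> acts_trivially G \<phi> H N"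
  proof -
    have "\<phi> \<in> hom G G" using \<phi> by (simp add: auto_def)
    then have "N #> \<phi> h = N #> h \<longleftrightarrow> \<phi> h \<otimes> inv h \<in> N" if "h \<in> H" for h
      using that H_carrier by (intro N.rcos_eq_rcos_iff) (auto intro: hom_in_carrier)
    then show ?thesis by (simp add: acts_trivially_def)
  qed
  finally show ?thesis .
qed

lemma induced_map_pow_eq_one_iff:
  assumes \<phi>: "\<phi> \<in> auto G"
  shows "induced_map G H N \<phi> [^]\<^bsub>BijGroup Q\<^esub> n = \<one>\<^bsub>BijGroup Q\<^esub> \<longleftrightarrow> acts_trivially G (\<phi> ^^ n) H N"
proof -
  interpret ind: group_hom "AutoGroup G" "BijGroup Q" "induced_map G H N"
    by (simp add: group_hom_def group_hom_axioms_def AutoGroup group_BijGroup induced_map_hom)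
  have \<phi>A: "\<phi> \<in> carrier (AutoGroup G)" using \<phi> by (simp add: carrier_AutoGroup)
  then have "\<phi> [^]\<^bsub>AutoGroup G\<^esub> n \<in> auto G" using ind.G.nat_pow_closed unfolding carrier_AutoGroup by blast
  then have "induced_map G H N \<phi> [^]\<^bsub>BijGroup Q\<^esub> n = \<one>\<^bsub>BijGroup Q\<^esub>
      \<longleftrightarrow> acts_trivially G (\<phi> [^]\<^bsub>AutoGroup G\<^esub> n) H N"
    using \<phi>A by (simp add: ind.hom_nat_pow [symmetric] induced_map_eq_one_iff)
  also have "\<dots> \<longleftrightarrow> acts_trivially G (\<phi> ^^ n) H N"
    using AutoGroup_pow_apply[OF \<phi>] H_carrier by (auto simp: acts_trivially_def subsetD)
  finally show ?thesis .
qed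

lemma finite_p_group_image_iff:
  assumes p: "Factorial_Ring.prime p" and A: "subgroup A (AutoGroup G)" and fin: "finite Q"
  shows "finite_p_group p (induced_map G H N ` A) \<longleftrightarrow> (\<exists>e. \<forall>\<phi>\<in>A. acts_trivially G (\<phi> ^^ p ^ e) H N)"
proof -
  interpret ind: group_hom "AutoGroup G" "BijGroup Q" "induced_map G H N"
    by (simp add: group_hom_def group_hom_axioms_def AutoGroup group_BijGroup induced_map_hom)
  let ?T = "induced_map G H N ` A"
  have T: "subgroup ?T (BijGroup Q)" by (rule ind.subgroup_img_is_subgroup[OF A])
  interpret T: group "BijGroup Q\<lparr>carrier := ?T\<rparr>" by (rule ind.H.subgroup_imp_group[OF T])
  have fin_T: "finite ?T"
    using subgroup.subset[OF T] finite_Bij[OF fin] by (auto simp: BijGroup_def intro: finite_subset)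
  have auto: "\<phi> \<in> auto G" if "\<phi> \<in> A" for \<phi>
    using subgroup.subset[OF A] that by (auto simp: carrier_AutoGroup)
  have pow: "x [^]\<^bsub>BijGroup Q\<lparr>carrier := ?T\<rparr>\<^esub> n = x [^]\<^bsub>BijGroup Q\<^esub> n" for x and n :: nat
    by (rule ind.H.nat_pow_consistent [symmetric])
  show ?thesis
  proof
    assume "finite_p_group p ?T"
    then obtain e where e: "card ?T = p ^ e" by (auto simp: finite_p_group_def)
    have "acts_trivially G (\<phi> ^^ p ^ e) H N" if \<phi>: "\<phi> \<in> A" for \<phi>
    proof -
      have "induced_map G H N \<phi> [^]\<^bsub>BijGroup Q\<lparr>carrier := ?T\<rparr>\<^esub> order (BijGroup Q\<lparr>carrier := ?T\<rparr>)
          = \<one>\<^bsub>BijGroup Q\<lparr>carrier := ?T\<rparr>\<^esub>"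
        using \<phi> by (intro T.pow_order_eq_1) simp
      then show ?thesis using e by (simp add: pow order_def induced_map_pow_eq_one_iff[OF auto[OF \<phi>]])
    qed
    then show "\<exists>e. \<forall>\<phi>\<in>A. acts_trivially G (\<phi> ^^ p ^ e) H N" by blast
  next
    assume "\<exists>e. \<forall>\<phi>\<in>A. acts_trivially G (\<phi> ^^ p ^ e) H N"
    then obtain e where e: "\<And>\<phi>. \<phi> \<in> A \<Longrightarrow> acts_trivially G (\<phi> ^^ p ^ e) H N" by blast
    have "\<exists>j. order (BijGroup Q\<lparr>carrier := ?T\<rparr>) = p ^ j"
    proof (rule T.order_eq_prime_power_if_exponent[OF p])
      show "finite (carrier (BijGroup Q\<lparr>carrier := ?T\<rparr>))" using fin_T by simp
      fix x assume "x \<in> carrier (BijGroup Q\<lparr>carrier := ?T\<rparr>)"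
      then obtain \<phi> where "\<phi> \<in> A" "x = induced_map G H N \<phi>" by auto
      then show "x [^]\<^bsub>BijGroup Q\<lparr>carrier := ?T\<rparr>\<^esub> (p ^ e) = \<one>\<^bsub>BijGroup Q\<lparr>carrier := ?T\<rparr>\<^esub>"
        using e by (simp add: pow induced_map_pow_eq_one_iff[OF auto])
    qed
    then show "finite_p_group p ?T" using fin_T by (simp add: finite_p_group_def order_def)
  qed
qed

end

lemma theta_Suc: "theta G p (Suc k) = induced_map G (lpc_aux G p k) (lpc_aux G p (Suc k))"
  by (simp add: theta_def Lquot_def induced_map_def gamma_def fun_eq_iff)

lemma sigma_Suc: "sigma G p (Suc k) = induced_map G (carrier G) (lpc_aux G p k)"
  by (simp add: sigma_def induced_map_def gamma_def fun_eq_iff)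

context lower_p_central
begin

lemma finite_p_group_theta_iff:
  assumes p: "Factorial_Ring.prime p" and fg: "fin_gen G" and A: "subgroup A (AutoGroup G)"
  shows "finite_p_group p (theta G p (Suc k) ` A)
    \<longleftrightarrow> (\<exists>e. \<forall>\<phi>\<in>A. acts_trivially G (\<phi> ^^ p ^ e) (\<Gamma> k) (\<Gamma> (Suc k)))"
proof -
  interpret invariant_section G "\<Gamma> k" "\<Gamma> (Suc k)"
    by (intro invariant_section.intro invariant_section_axioms.intro)
      (simp_all add: is_group \<Gamma>_subgroup \<Gamma>_normal \<Gamma>_fully_invariant)
  have "finite Q" unfolding Q_eq by (rule finite_layer_\<Gamma>[OF fg prime_gt_0_nat[OF p]])
  then show ?thesis using finite_p_group_image_iff[OF p A] by (simp add: theta_Suc)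
qed

lemma finite_p_group_sigma_iff:
  assumes p: "Factorial_Ring.prime p" and fg: "fin_gen G" and A: "subgroup A (AutoGroup G)"
  shows "finite_p_group p (sigma G p (Suc k) ` A)
    \<longleftrightarrow> (\<exists>e. \<forall>\<phi>\<in>A. acts_trivially G (\<phi> ^^ p ^ e) (carrier G) (\<Gamma> k))"
proof -
  have "fully_invariant G (carrier G)"
    unfolding fully_invariant_def by (auto intro: hom_in_carrier)
  then interpret invariant_section G "carrier G" "\<Gamma> k"
    by (intro invariant_section.intro invariant_section_axioms.intro)
      (simp_all add: is_group subgroup_self \<Gamma>_normal \<Gamma>_fully_invariant)
  have "finite Q" unfolding Q_eq by (rule finite_quotient_\<Gamma>[OF fg prime_gt_0_nat[OF p]])
  then show ?thesis using finite_p_group_image_iff[OF p A] by (simp add: sigma_Suc)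
qed

lemma finite_p_group_theta_sigma:
  assumes p: "Factorial_Ring.prime p" and fg: "fin_gen G" and A: "subgroup A (AutoGroup G)"
    and theta1: "finite_p_group p (theta G p 1 ` A)"
  shows "finite_p_group p (theta G p (Suc k) ` A) \<and> finite_p_group p (sigma G p (Suc k) ` A)"
proof -
  obtain e where e: "\<And>\<phi>. \<phi> \<in> A \<Longrightarrow> acts_trivially G (\<phi> ^^ p ^ e) (carrier G) (\<Gamma> 1)"
    using theta1 finite_p_group_theta_iff[OF p fg A, of 0] by auto
  have hom: "\<phi> ^^ p ^ e \<in> hom G G" if "\<phi> \<in> A" for \<phi>
    using that subgroup.subset[OF A] by (intro funpow_hom) (auto simp: carrier_AutoGroup auto_def)
  have "acts_trivially G (\<phi> ^^ p ^ e) (\<Gamma> k) (\<Gamma> (Suc k))" if "\<phi> \<in> A" for \<phi>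
    using acts_trivially_layer[OF hom[OF that] e[OF that]] .
  moreover have "acts_trivially G (\<phi> ^^ p ^ (e + k)) (carrier G) (\<Gamma> k)" if "\<phi> \<in> A" for \<phi>
    using acts_trivially_funpow_p_power[OF hom[OF that] e[OF that], of k] \<Gamma>_Suc_subset_\<Gamma>
    by (auto simp: acts_trivially_def funpow_mult power_add)
  ultimately show ?thesis
    using finite_p_group_theta_iff[OF p fg A] finite_p_group_sigma_iff[OF p fg A] by blast
qed

end

theorem corollary3p5:
  fixes G :: "('a, 'b) monoid_scheme" and p :: nat and A :: "('a \<Rightarrow> 'a) set"
  assumes "Factorial_Ring.prime p" and "group G" and "fin_gen G"
    and "subgroup A (AutoGroup G)"
  shows "(finite_p_group p (theta G p 1 ` A) \<longleftrightarrow>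
            (\<forall>n\<ge>1. finite_p_group p (theta G p n ` A)))
       \<and> (finite_p_group p (theta G p 1 ` A) \<longleftrightarrow>
            (\<forall>n\<ge>1. finite_p_group p (sigma G p n ` A)))"
proof -
  interpret lower_p_central G p by (rule lower_p_central.intro[OF assms(2)])
  have forward: "finite_p_group p (theta G p n ` A) \<and> finite_p_group p (sigma G p n ` A)"
    if "finite_p_group p (theta G p 1 ` A)" "n \<ge> 1" for n
    using finite_p_group_theta_sigma[OF assms(1,3,4) that(1), of "n - 1"] that(2) by simp
  have "theta G p 1 = sigma G p 2"
    using theta_Suc[of G p 0] sigma_Suc[of G p 1] by (simp add: numeral_2_eq_2)
  then show ?thesis using forward by (metis le_refl one_le_numeral)
qed

end
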